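(* For the Physarum solver of the transportation problem on $G$ with arbitrary positive initial diameters, if no two distinct equilibria have the same cost, then $D(t)$ converges to an equilibrium $D^*$, and $D^*=|F^*|$ for a minimum-cost feasible solution $F^*$ of the transportation problem.
   Context: Let $G=(N,E)$ be a finite connected undirected graph with edge lengths $L_e>0$ and supplies/demands $b_v\in\mathbb R$ with $\sum_vb_v=0$. A feasible solution of the (uncapacitated) transportation problem is a flow $F$ (value on each edge with a fixed reference orientation) whose net outflow at each vertex $v$ equals $b_v$; its cost is $\sum_eL_e|F_e|$. Physarum solver: each edge has a time-dependent diameter $D_e(t)$ with $D_e(0)>0$ and resistance $R_e=L_e/D_e$; at each time the current $Q$ is the feasible solution satisfying Ohm's law $Q_e=D_e(p_u-p_v)/L_e$ for $e=(u,v)$ for some vertex potentials $p$ (i.e. $\sum_{u\in\delta(v)}(p_v-p_u)/R_{uv}=b_v$ for all $v$); the dynamics are $\dot D_e=|Q_e|-D_e$. $D\in\mathbb R^E_{\ge0}$ is an equilibrium point if $D_e=|Q_e|$ for all $e$ (edges with $D_e=0$ treated as absent); the cost of an equilibrium $D$ is $\sum_eL_eD_e$. *)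

theory Defs
  imports "HOL-Analysis.Analysis"
begin

text \<open>A finite undirected (multi)graph with vertex set N and edge set E; every edge
  e has a fixed reference orientation from src e to tgt e.\<close>

definition graph_connected :: "'v set \<Rightarrow> 'e set \<Rightarrow> ('e \<Rightarrow> 'v) \<Rightarrow> ('e \<Rightarrow> 'v) \<Rightarrow> bool" where
  "graph_connected N E src tgt \<longleftrightarrow>
     (let A = {(src e, tgt e) | e. e \<in> E} \<union> {(tgt e, src e) | e. e \<in> E}
      in \<forall>u\<in>N. \<forall>v\<in>N. (u, v) \<in> A\<^sup>*)"

definition net_outflow :: "'e set \<Rightarrow> ('e \<Rightarrow> 'v) \<Rightarrow> ('e \<Rightarrow> 'v) \<Rightarrow> ('e \<Rightarrow> real) \<Rightarrow> 'v \<Rightarrow> real" where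
  "net_outflow E src tgt F v = (\<Sum>e\<in>{e\<in>E. src e = v}. F e) - (\<Sum>e\<in>{e\<in>E. tgt e = v}. F e)"

definition feasible_flow :: "'v set \<Rightarrow> 'e set \<Rightarrow> ('e \<Rightarrow> 'v) \<Rightarrow> ('e \<Rightarrow> 'v) \<Rightarrow> ('v \<Rightarrow> real) \<Rightarrow> ('e \<Rightarrow> real) \<Rightarrow> bool" where
  "feasible_flow N E src tgt b F \<longleftrightarrow> (\<forall>v\<in>N. net_outflow E src tgt F v = b v)"

definition flow_cost :: "'e set \<Rightarrow> ('e \<Rightarrow> real) \<Rightarrow> ('e \<Rightarrow> real) \<Rightarrow> real" where
  "flow_cost E L F = (\<Sum>e\<in>E. L e * \<bar>F e\<bar>)"

definition is_current :: "'v set \<Rightarrow> 'e set \<Rightarrow> ('e \<Rightarrow> 'v) \<Rightarrow> ('e \<Rightarrow> 'v) \<Rightarrow> ('v \<Rightarrow> real) \<Rightarrow> ('e \<Rightarrow> real)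
    \<Rightarrow> ('e \<Rightarrow> real) \<Rightarrow> ('e \<Rightarrow> real) \<Rightarrow> bool" where
  "is_current N E src tgt b L D Q \<longleftrightarrow> feasible_flow N E src tgt b Q \<and>
     (\<exists>p :: 'v \<Rightarrow> real. \<forall>e\<in>E. Q e = D e * (p (src e) - p (tgt e)) / L e)"

text \<open>Equilibrium point: nonnegative diameters with D_e = |Q_e| for the current Q of D
  (edges with D_e = 0 carry no current by Ohm's law, i.e. are treated as absent).\<close>
definition equilibrium :: "'v set \<Rightarrow> 'e set \<Rightarrow> ('e \<Rightarrow> 'v) \<Rightarrow> ('e \<Rightarrow> 'v) \<Rightarrow> ('v \<Rightarrow> real) \<Rightarrow> ('e \<Rightarrow> real)
    \<Rightarrow> ('e \<Rightarrow> real) \<Rightarrow> bool" where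
  "equilibrium N E src tgt b L D \<longleftrightarrow> (\<forall>e\<in>E. D e \<ge> 0) \<and>
     (\<exists>Q. is_current N E src tgt b L D Q \<and> (\<forall>e\<in>E. D e = \<bar>Q e\<bar>))"

definition equilibrium_cost :: "'e set \<Rightarrow> ('e \<Rightarrow> real) \<Rightarrow> ('e \<Rightarrow> real) \<Rightarrow> real" where
  "equilibrium_cost E L D = (\<Sum>e\<in>E. L e * D e)"

definition physarum_solution :: "'v set \<Rightarrow> 'e set \<Rightarrow> ('e \<Rightarrow> 'v) \<Rightarrow> ('e \<Rightarrow> 'v) \<Rightarrow> ('v \<Rightarrow> real) \<Rightarrow> ('e \<Rightarrow> real)
    \<Rightarrow> (real \<Rightarrow> 'e \<Rightarrow> real) \<Rightarrow> bool" where
  "physarum_solution N E src tgt b L D \<longleftrightarrow> (\<forall>e\<in>E. D 0 e > 0) \<and>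
     (\<forall>t\<ge>0. \<exists>Q. is_current N E src tgt b L (D t) Q \<and>
        (\<forall>e\<in>E. ((\<lambda>s. D s e) has_real_derivative (\<bar>Q e\<bar> - D t e)) (at t within {0..})))"

end

theory Submission
  imports Defs
begin

text \<open>Along the trajectory the current Q minimises the energy, the sum of L_e Q_e^2 / D_e, among
  all feasible flows (Thomson's principle). Energy plus cost (the sum of L_e D_e) is a Lyapunov
  function V: its derivative is minus a nonnegative dissipation that vanishes exactly when
  |Q| = D. Hence D stays bounded and V decreases to a limit. Near times of small dissipation,
  D(t) can only accumulate at equilibria, and their cost is half the limit of V. So all
  accumulation points of D(t) have the same cost, hence coincide by hypothesis, and D converges.
  Finally, if some feasible flow F were cheaper than the limit, the sum of L_e |F_e| ln D_e would
  grow linearly in t, contradicting the bound on D.\<close>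

lemma sum_flow_times_potential_drop:
  assumes "finite E" "finite N" "\<forall>e\<in>E. src e \<in> N \<and> tgt e \<in> N"
  shows "(\<Sum>e\<in>E. F e * (p (src e) - p (tgt e))) = (\<Sum>v\<in>N. p v * net_outflow E src tgt F v)"
proof -
  have endpoint_sum: "(\<Sum>v\<in>N. p v * (\<Sum>e\<in>{e\<in>E. g e = v}. F e)) = (\<Sum>e\<in>E. F e * p (g e))"
    if g: "\<forall>e\<in>E. g e \<in> N" for g :: "'a \<Rightarrow> 'b"
  proof -
    have "(\<Sum>v\<in>N. p v * (\<Sum>e\<in>{e\<in>E. g e = v}. F e)) = (\<Sum>v\<in>N. \<Sum>e\<in>E. if g e = v then p v * F e else 0)"
      by (simp add: sum_distrib_left sum.inter_filter[OF assms(1)] if_distrib cong: if_cong)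
    also have "\<dots> = (\<Sum>e\<in>E. \<Sum>v\<in>N. if g e = v then p v * F e else 0)" by (rule sum.swap)
    also have "\<dots> = (\<Sum>e\<in>E. F e * p (g e))"
      using g assms(2) by (intro sum.cong refl) (simp add: mult.commute)
    finally show ?thesis .
  qed
  have "\<forall>e\<in>E. src e \<in> N" and "\<forall>e\<in>E. tgt e \<in> N" using assms(3) by auto
  then show ?thesis
    unfolding net_outflow_def right_diff_distrib sum_subtractf
    by (simp add: endpoint_sum)
qed

lemma feasible_flows_difference_orthogonal:
  assumes "finite E" "finite N" "\<forall>e\<in>E. src e \<in> N \<and> tgt e \<in> N"
    and "feasible_flow N E src tgt b F" "feasible_flow N E src tgt b G"
  shows "(\<Sum>e\<in>E. (F e - G e) * (p (src e) - p (tgt e))) = 0"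
proof -
  have "(\<Sum>e\<in>E. (F e - G e) * (p (src e) - p (tgt e))) =
      (\<Sum>e\<in>E. F e * (p (src e) - p (tgt e))) - (\<Sum>e\<in>E. G e * (p (src e) - p (tgt e)))"
    by (simp add: left_diff_distrib sum_subtractf)
  also have "\<dots> = (\<Sum>v\<in>N. p v * b v) - (\<Sum>v\<in>N. p v * b v)"
    using assms unfolding sum_flow_times_potential_drop[OF assms(1-3)] feasible_flow_def by simp
  finally show ?thesis by simp
qed

lemma relpow_abs_diff_le:
  assumes "(u, w) \<in> R ^^ k" "\<forall>(x, y)\<in>R. \<bar>p x - p y\<bar> \<le> (B::real)"
  shows "\<bar>p u - p w\<bar> \<le> real k * B"
  using assms(1)
proof (induction k arbitrary: w)
  case 0
  then show ?case by simp
next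
  case (Suc k)
  then obtain y where "(u, y) \<in> R ^^ k" "(y, w) \<in> R" by auto
  with Suc.IH have "\<bar>p u - p y\<bar> \<le> real k * B" by blast
  moreover have "\<bar>p y - p w\<bar> \<le> B" using assms(2) \<open>(y, w) \<in> R\<close> by auto
  ultimately show ?case by (simp add: algebra_simps)
qed

text \<open>rep v represents the connected component of v in the subgraph with edge set S, and k v is the
  length of a path joining them.\<close>

lemma component_representatives:
  fixes S :: "'e set" and src tgt :: "'e \<Rightarrow> 'v"
  obtains rep :: "'v \<Rightarrow> 'v" and k :: "'v \<Rightarrow> nat"
  where "\<And>e. e \<in> S \<Longrightarrow> rep (src e) = rep (tgt e)"
    and "\<And>p B v. \<forall>e\<in>S. \<bar>p (src e) - p (tgt e)\<bar> \<le> (B::real) \<Longrightarrow> \<bar>p v - p (rep v)\<bar> \<le> real (k v) * B"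
proof -
  define R where "R = {(src e, tgt e) | e. e \<in> S} \<union> {(tgt e, src e) | e. e \<in> S}"
  define rep where "rep v = (SOME u. (u, v) \<in> R\<^sup>*)" for v
  have rep_eq: "rep (src e) = rep (tgt e)" if "e \<in> S" for e
  proof -
    have "(src e, tgt e) \<in> R" "(tgt e, src e) \<in> R" using that unfolding R_def by blast+
    then have "(\<lambda>u. (u, src e) \<in> R\<^sup>*) = (\<lambda>u. (u, tgt e) \<in> R\<^sup>*)"
      by (intro ext) (auto intro: rtrancl_into_rtrancl)
    then show ?thesis unfolding rep_def by simp
  qed
  have "(rep v, v) \<in> R\<^sup>*" for v
    unfolding rep_def by (rule someI[where P = "\<lambda>u. (u, v) \<in> R\<^sup>*" and x = v]) simp
  then have "\<exists>k. (rep v, v) \<in> R ^^ k" for v by (simp add: rtrancl_power)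
  then obtain k where k: "\<And>v. (rep v, v) \<in> R ^^ k v" by metis
  have "\<bar>p v - p (rep v)\<bar> \<le> real (k v) * B"
    if "\<forall>e\<in>S. \<bar>p (src e) - p (tgt e)\<bar> \<le> B" for p B v
  proof -
    have "\<forall>(x, y)\<in>R. \<bar>p x - p y\<bar> \<le> B" using that unfolding R_def by (auto simp: abs_minus_commute)
    from relpow_abs_diff_le[OF k this] show ?thesis by (simp add: abs_minus_commute)
  qed
  with rep_eq show thesis by (rule that)
qed

lemma nonneg_derivative_imp_le:
  assumes "a \<le> s" "\<And>t. t \<in> {a..s} \<Longrightarrow> (f has_real_derivative f' t) (at t within {a..s})"
    and "\<And>t. t \<in> {a..s} \<Longrightarrow> f' t \<ge> 0"
  shows "f a \<le> f s"
proof -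
  have "(f' has_integral f s - f a) {a..s}"
    using assms(1,2) by (intro fundamental_theorem_of_calculus)
      (auto simp: has_real_derivative_iff_has_vector_derivative[symmetric])
  from has_integral_nonneg[OF this] assms(3) show ?thesis by auto
qed

lemma finite_bounded_imp_convergent_subsequence:
  fixes f :: "nat \<Rightarrow> 'a \<Rightarrow> real"
  assumes "finite A" "\<And>n x. x \<in> A \<Longrightarrow> \<bar>f n x\<bar> \<le> B x"
  obtains r g where "strict_mono r" "\<forall>x\<in>A. (\<lambda>n. f (r n) x) \<longlonglongrightarrow> g x"
proof -
  have "\<exists>r g. strict_mono r \<and> (\<forall>x\<in>A. (\<lambda>n. f (r n) x) \<longlonglongrightarrow> g x)"
    using assms
  proof (induction A rule: finite_induct)
    case empty
    show ?case by (rule exI[of _ id]) (auto simp: strict_mono_def)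
  next
    case (insert a A)
    then obtain r g where r: "strict_mono r" "\<forall>x\<in>A. (\<lambda>n. f (r n) x) \<longlonglongrightarrow> g x" by auto
    have "bounded (range (\<lambda>n. f (r n) a))"
      using insert.prems by (intro boundedI[of _ "B a"]) auto
    then obtain l r' where r': "strict_mono r'" "((\<lambda>n. f (r n) a) \<circ> r') \<longlonglongrightarrow> l"
      using bounded_imp_convergent_subsequence by blast
    have "(\<lambda>n. f ((r \<circ> r') n) x) \<longlonglongrightarrow> (g(a := l)) x" if "x \<in> insert a A" for x
    proof (cases "x = a")
      case True
      then show ?thesis using r'(2) by (simp add: o_def)
    next
      case False
      with that have "x \<in> A" by simp
      from LIMSEQ_subseq_LIMSEQ[OF r(2)[rule_format, OF this] r'(1)] False
      show ?thesis by (simp add: o_def)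
    qed
    moreover have "strict_mono (r \<circ> r')" using r(1) r'(1) by (rule strict_mono_o)
    ultimately show ?case by blast
  qed
  then show thesis using that by blast
qed

lemma eventually_bounded_imp_convergent_subsequence:
  fixes f :: "nat \<Rightarrow> 'a \<Rightarrow> real"
  assumes "finite A" "eventually (\<lambda>n. \<forall>x\<in>A. \<bar>f n x\<bar> \<le> B x) sequentially"
  obtains r g where "strict_mono r" "\<forall>x\<in>A. (\<lambda>n. f (r n) x) \<longlonglongrightarrow> g x"
proof -
  obtain n0 where n0: "\<And>n. n \<ge> n0 \<Longrightarrow> \<forall>x\<in>A. \<bar>f n x\<bar> \<le> B x"
    using assms(2) unfolding eventually_sequentially by auto
  obtain r g where r: "strict_mono r" "\<forall>x\<in>A. (\<lambda>n. f (r n + n0) x) \<longlonglongrightarrow> g x"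
    using finite_bounded_imp_convergent_subsequence[OF assms(1), of "\<lambda>n. f (n + n0)" B] n0 by auto
  have "strict_mono (\<lambda>n. r n + n0)" using r(1) by (simp add: strict_mono_def)
  with r(2) show thesis using that by blast
qed

lemma quotient_between_min_max:
  fixes a s t lo up :: real
  assumes "(s - t) * lo \<le> a" "a \<le> (s - t) * up" "s \<noteq> t"
  shows "min up lo \<le> a / (s - t) \<and> a / (s - t) \<le> max up lo"
proof (cases "s < t")
  case True
  then have "up \<le> a / (s - t)" "a / (s - t) \<le> lo" using assms by (simp_all add: field_simps)
  then show ?thesis by linarith
next
  case False
  then have "lo \<le> a / (s - t)" "a / (s - t) \<le> up" using assms by (simp_all add: field_simps)
  then show ?thesis by linarith
qed

lemma dissipation_identity:
  fixes c d l :: real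
  assumes "d > 0"
  shows "l * (\<bar>c\<bar> - d) + l * c\<^sup>2 * ((d - \<bar>c\<bar>) / d\<^sup>2) =
    - (l * (\<bar>c\<bar> - d)\<^sup>2 * (\<bar>c\<bar> + d) / d\<^sup>2)"
proof -
  have "c\<^sup>2 = \<bar>c\<bar>\<^sup>2" by simp
  then show ?thesis using assms by (simp only:) (simp add: field_simps power2_eq_square)
qed

locale physarum_trajectory =
  fixes N :: "'v set" and E :: "'e set" and src tgt :: "'e \<Rightarrow> 'v"
    and L :: "'e \<Rightarrow> real" and b :: "'v \<Rightarrow> real" and D :: "real \<Rightarrow> 'e \<Rightarrow> real"
  assumes finite_N: "finite N" and finite_E: "finite E"
    and endpoints: "\<forall>e\<in>E. src e \<in> N \<and> tgt e \<in> N"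
    and L_pos: "\<forall>e\<in>E. L e > 0"
    and solution: "physarum_solution N E src tgt b L D"
begin

section \<open>The current and its energy\<close>

definition current :: "real \<Rightarrow> 'e \<Rightarrow> real" where
  "current t = (SOME Q. is_current N E src tgt b L (D t) Q \<and>
     (\<forall>e\<in>E. ((\<lambda>s. D s e) has_real_derivative (\<bar>Q e\<bar> - D t e)) (at t within {0..})))"

lemma current_spec:
  assumes "t \<ge> 0"
  shows "is_current N E src tgt b L (D t) (current t)"
    and "\<forall>e\<in>E. ((\<lambda>s. D s e) has_real_derivative (\<bar>current t e\<bar> - D t e)) (at t within {0..})"
proof -
  have "\<exists>Q. is_current N E src tgt b L (D t) Q \<and>
     (\<forall>e\<in>E. ((\<lambda>s. D s e) has_real_derivative (\<bar>Q e\<bar> - D t e)) (at t within {0..}))"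
    using solution assms unfolding physarum_solution_def by blast
  from someI_ex[OF this] show "is_current N E src tgt b L (D t) (current t)"
    and "\<forall>e\<in>E. ((\<lambda>s. D s e) has_real_derivative (\<bar>current t e\<bar> - D t e)) (at t within {0..})"
    unfolding current_def by blast+
qed

definition potential :: "real \<Rightarrow> 'v \<Rightarrow> real" where
  "potential t = (SOME p. \<forall>e\<in>E. current t e = D t e * (p (src e) - p (tgt e)) / L e)"

lemma current_ohm:
  assumes "t \<ge> 0" "e \<in> E"
  shows "current t e = D t e * (potential t (src e) - potential t (tgt e)) / L e"
proof -
  have "\<exists>p. \<forall>e\<in>E. current t e = D t e * (p (src e) - p (tgt e)) / L e"
    using current_spec(1)[OF assms(1)] unfolding is_current_def by blast
  from someI_ex[OF this] assms(2) show ?thesis unfolding potential_def by blast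
qed

lemma current_feasible: "t \<ge> 0 \<Longrightarrow> feasible_flow N E src tgt b (current t)"
  using current_spec(1) unfolding is_current_def by blast

lemma diameter_has_derivative:
  "t \<ge> 0 \<Longrightarrow> e \<in> E \<Longrightarrow>
   ((\<lambda>s. D s e) has_real_derivative (\<bar>current t e\<bar> - D t e)) (at t within {0..})"
  using current_spec(2) by blast

lemma diameter_has_derivative_within:
  "t \<in> {a..c} \<Longrightarrow> a \<ge> 0 \<Longrightarrow> e \<in> E \<Longrightarrow>
   ((\<lambda>s. D s e) has_real_derivative (\<bar>current t e\<bar> - D t e)) (at t within {a..c})"
  by (rule has_field_derivative_subset[OF diameter_has_derivative]) auto

lemma diameter_tendsto: "e \<in> E \<Longrightarrow> t \<ge> 0 \<Longrightarrow> ((\<lambda>s. D s e) \<longlongrightarrow> D t e) (at t within {0..})"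
  using DERIV_continuous[OF diameter_has_derivative] by (simp add: continuous_within)

text \<open>Since D' \<ge> -D, the function e^t D(t) is nondecreasing.\<close>

lemma diameter_pos:
  assumes "t \<ge> 0" "e \<in> E"
  shows "D t e > 0"
proof -
  have "D 0 e * exp 0 \<le> D t e * exp t"
  proof (rule nonneg_derivative_imp_le[where f = "\<lambda>s. D s e * exp s"])
    fix s assume s: "s \<in> {0..t}"
    show "((\<lambda>s. D s e * exp s) has_real_derivative
        ((\<bar>current s e\<bar> - D s e) * exp s + exp s * D s e)) (at s within {0..t})"
      by (rule DERIV_mult[OF diameter_has_derivative_within[OF s _ assms(2)]])
        (auto intro!: derivative_eq_intros)
    show "0 \<le> (\<bar>current s e\<bar> - D s e) * exp s + exp s * D s e"
      by (simp add: algebra_simps)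
  qed (use assms in auto)
  moreover have "D 0 e > 0" using solution assms unfolding physarum_solution_def by auto
  ultimately have "D t e * exp t > 0" by simp
  then show ?thesis by (simp add: zero_less_mult_iff)
qed

lemma potential_drop:
  "t \<ge> 0 \<Longrightarrow> e \<in> E \<Longrightarrow> potential t (src e) - potential t (tgt e) = L e * current t e / D t e"
  using current_ohm[of t e] diameter_pos[of t e] L_pos by (auto simp: field_simps)

definition energy :: "real \<Rightarrow> real" where
  "energy t = (\<Sum>e\<in>E. L e * (current t e)\<^sup>2 / D t e)"

definition cost :: "real \<Rightarrow> real" where
  "cost t = (\<Sum>e\<in>E. L e * D t e)"

lemma energy_term_nonneg: "t \<ge> 0 \<Longrightarrow> e \<in> E \<Longrightarrow> L e * x\<^sup>2 / D t e \<ge> 0"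
  using diameter_pos[of t e] L_pos by auto

lemma energy_nonneg: "t \<ge> 0 \<Longrightarrow> energy t \<ge> 0"
  unfolding energy_def by (intro sum_nonneg energy_term_nonneg)

lemma cost_nonneg: "t \<ge> 0 \<Longrightarrow> cost t \<ge> 0"
  unfolding cost_def using L_pos diameter_pos[of t] by (intro sum_nonneg) (auto intro: less_imp_le)

text \<open>Thomson's principle: the cross term vanishes because F - Q is a circulation and L Q / D is
  a potential drop.\<close>

lemma energy_decomposition:
  assumes "t \<ge> 0" "feasible_flow N E src tgt b F"
  shows "(\<Sum>e\<in>E. L e * (F e)\<^sup>2 / D t e) = energy t + (\<Sum>e\<in>E. L e * (F e - current t e)\<^sup>2 / D t e)"
proof -
  let ?drop = "\<lambda>e. potential t (src e) - potential t (tgt e)"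
  have orth: "(\<Sum>e\<in>E. (F e - current t e) * ?drop e) = 0"
    by (rule feasible_flows_difference_orthogonal[OF finite_E finite_N endpoints
          assms(2) current_feasible[OF assms(1)]])
  have "(\<Sum>e\<in>E. L e * (F e)\<^sup>2 / D t e) = (\<Sum>e\<in>E. L e * (current t e)\<^sup>2 / D t e
      + L e * (F e - current t e)\<^sup>2 / D t e + 2 * ((F e - current t e) * ?drop e))"
  proof (rule sum.cong[OF refl])
    fix e assume e: "e \<in> E"
    show "L e * (F e)\<^sup>2 / D t e = L e * (current t e)\<^sup>2 / D t e
      + L e * (F e - current t e)\<^sup>2 / D t e + 2 * ((F e - current t e) * ?drop e)"
      using diameter_pos[OF assms(1) e] unfolding potential_drop[OF assms(1) e]
      by (simp add: field_simps power2_eq_square)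
  qed
  also have "\<dots> = energy t + (\<Sum>e\<in>E. L e * (F e - current t e)\<^sup>2 / D t e)"
    unfolding sum.distrib energy_def sum_distrib_left[symmetric] orth by simp
  finally show ?thesis .
qed

lemma energy_le_flow_energy:
  assumes "t \<ge> 0" "feasible_flow N E src tgt b F"
  shows "energy t \<le> (\<Sum>e\<in>E. L e * (F e)\<^sup>2 / D t e)"
  unfolding energy_decomposition[OF assms]
  using sum_nonneg[of E "\<lambda>e. L e * (F e - current t e)\<^sup>2 / D t e"] energy_term_nonneg[OF assms(1)]
  by auto

lemma current_sq_le:
  assumes "t \<ge> 0" "e \<in> E"
  shows "L e * (current t e)\<^sup>2 \<le> D t e * energy t"
proof -
  have "L e * (current t e)\<^sup>2 / D t e \<le> energy t"
    unfolding energy_def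
    by (rule member_le_sum[OF assms(2) _ finite_E]) (rule energy_term_nonneg[OF assms(1)], auto)
  then show ?thesis using diameter_pos[OF assms] by (simp add: field_simps)
qed

lemma inverse_diameter_tendsto:
  "e \<in> E \<Longrightarrow> t \<ge> 0 \<Longrightarrow> ((\<lambda>s. 1 / D s e) \<longlongrightarrow> 1 / D t e) (at t within {0..})"
  by (rule tendsto_divide[OF tendsto_const diameter_tendsto]) (auto dest: diameter_pos)

lemma fixed_current_energy_tendsto:
  assumes "t \<ge> 0"
  shows "((\<lambda>s. \<Sum>e\<in>E. L e * (current t e)\<^sup>2 / D s e) \<longlongrightarrow> energy t) (at t within {0..})"
proof -
  have "((\<lambda>s. \<Sum>e\<in>E. L e * (current t e)\<^sup>2 * (1 / D s e)) \<longlongrightarrow>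
      (\<Sum>e\<in>E. L e * (current t e)\<^sup>2 * (1 / D t e))) (at t within {0..})"
    by (intro tendsto_sum tendsto_mult tendsto_const inverse_diameter_tendsto assms)
  then show ?thesis unfolding energy_def by simp
qed

lemma rescaled_energy_le:
  assumes s: "s \<ge> 0" and t: "t \<ge> 0"
  shows "(\<Sum>e\<in>E. L e * (current s e)\<^sup>2 / D t e) \<le> energy s * (1 + (\<Sum>e\<in>E. \<bar>D s e / D t e - 1\<bar>))"
proof -
  have "L e * (current s e)\<^sup>2 / D t e \<le> L e * (current s e)\<^sup>2 / D s e + energy s * \<bar>D s e / D t e - 1\<bar>"
    if e: "e \<in> E" for e
  proof -
    define x where "x = L e * (current s e)\<^sup>2 / D s e"
    have x_nonneg: "0 \<le> x" unfolding x_def by (rule energy_term_nonneg[OF s e])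
    have x_le: "x \<le> energy s"
      unfolding x_def energy_def
      by (rule member_le_sum[OF e _ finite_E]) (rule energy_term_nonneg[OF s], auto)
    have "L e * (current s e)\<^sup>2 / D t e = x + x * (D s e / D t e - 1)"
      unfolding x_def using diameter_pos[OF s e] diameter_pos[OF t e] by (simp add: field_simps)
    also have "\<dots> \<le> x + x * \<bar>D s e / D t e - 1\<bar>"
      using x_nonneg by (intro add_left_mono mult_left_mono) auto
    also have "\<dots> \<le> x + energy s * \<bar>D s e / D t e - 1\<bar>"
      using x_le by (intro add_left_mono mult_right_mono) auto
    finally show ?thesis unfolding x_def .
  qed
  then have "(\<Sum>e\<in>E. L e * (current s e)\<^sup>2 / D t e) \<le>
      (\<Sum>e\<in>E. L e * (current s e)\<^sup>2 / D s e + energy s * \<bar>D s e / D t e - 1\<bar>)"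
    by (rule sum_mono)
  also have "\<dots> = energy s * (1 + (\<Sum>e\<in>E. \<bar>D s e / D t e - 1\<bar>))"
    by (simp add: sum.distrib sum_distrib_left energy_def distrib_left)
  finally show ?thesis .
qed

text \<open>By Thomson's principle at time t, the energy of Q(s) under the diameters D(t) exceeds
  the energy at time t exactly by the weighted distance of Q(s) from Q(t); this excess tends
  to 0.\<close>

lemma weighted_current_distance_tendsto_0:
  assumes t: "t \<ge> 0"
  shows "((\<lambda>s. \<Sum>e\<in>E. L e * (current s e - current t e)\<^sup>2 / D t e) \<longlongrightarrow> 0) (at t within {0..})"
    (is "(?gap \<longlongrightarrow> 0) ?F")
proof -
  define U where "U s = (\<Sum>e\<in>E. L e * (current t e)\<^sup>2 / D s e)" for s
  define bnd where "bnd s = U s * (1 + (\<Sum>e\<in>E. \<bar>D s e / D t e - 1\<bar>)) - energy t" for s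
  have "(U \<longlongrightarrow> energy t) ?F" unfolding U_def[abs_def] by (rule fixed_current_energy_tendsto[OF t])
  moreover have D_ne: "D t e \<noteq> 0" if "e \<in> E" for e using diameter_pos[OF t that] by simp
  ultimately have "(bnd \<longlongrightarrow> energy t * (1 + (\<Sum>e\<in>E. \<bar>D t e / D t e - 1\<bar>)) - energy t) ?F"
    unfolding bnd_def by (intro tendsto_intros diameter_tendsto t)
  moreover have "(\<Sum>e\<in>E. \<bar>D t e / D t e - 1\<bar>) = 0"
    by (intro sum.neutral) (simp add: D_ne)
  ultimately have bnd_lim: "(bnd \<longlongrightarrow> 0) ?F" by simp
  have "eventually (\<lambda>s. s \<ge> 0) ?F"
    unfolding eventually_at_filter by (rule always_eventually) simp
  then have gap_le: "eventually (\<lambda>s. ?gap s \<le> bnd s) ?F"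
  proof eventually_elim
    case (elim s)
    have "energy t + ?gap s = (\<Sum>e\<in>E. L e * (current s e)\<^sup>2 / D t e)"
      by (rule energy_decomposition[OF t current_feasible[OF elim], symmetric])
    also have "\<dots> \<le> energy s * (1 + (\<Sum>e\<in>E. \<bar>D s e / D t e - 1\<bar>))"
      by (rule rescaled_energy_le[OF elim t])
    also have "\<dots> \<le> U s * (1 + (\<Sum>e\<in>E. \<bar>D s e / D t e - 1\<bar>))"
      unfolding U_def
      by (intro mult_right_mono energy_le_flow_energy[OF elim current_feasible[OF t]])
        (auto intro: add_nonneg_nonneg sum_nonneg)
    finally show ?case unfolding bnd_def by simp
  qed
  have "eventually (\<lambda>s. 0 \<le> ?gap s) ?F"
    by (intro always_eventually allI sum_nonneg energy_term_nonneg[OF t])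
  from tendsto_sandwich[OF this gap_le tendsto_const bnd_lim] show ?thesis .
qed

lemma current_tendsto:
  assumes t: "t \<ge> 0" and e: "e \<in> E"
  shows "((\<lambda>s. current s e) \<longlongrightarrow> current t e) (at t within {0..})"
proof -
  define gap where "gap s = (\<Sum>e\<in>E. L e * (current s e - current t e)\<^sup>2 / D t e)" for s
  have "(gap \<longlongrightarrow> 0) (at t within {0..})"
    unfolding gap_def by (rule weighted_current_distance_tendsto_0[OF t])
  then have bound_lim: "((\<lambda>s. sqrt (D t e * gap s / L e)) \<longlongrightarrow> 0) (at t within {0..})"
    using L_pos e by (auto intro!: tendsto_eq_intros)
  have bound: "norm (current s e - current t e) \<le> sqrt (D t e * gap s / L e)" for s
  proof -
    have "L e * (current s e - current t e)\<^sup>2 / D t e \<le> gap s"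
      unfolding gap_def
      by (rule member_le_sum[OF e _ finite_E]) (rule energy_term_nonneg[OF t], auto)
    then have "(current s e - current t e)\<^sup>2 \<le> D t e * gap s / L e"
      using diameter_pos[OF t e] L_pos e by (simp add: field_simps)
    then show ?thesis by (simp add: real_le_rsqrt)
  qed
  from Lim_null_comparison[OF always_eventually[OF allI[OF bound]] bound_lim]
  show ?thesis by (rule LIM_zero_cancel)
qed

lemma inverse_diameter_has_derivative:
  assumes "t \<ge> 0" "e \<in> E"
  shows "((\<lambda>s. inverse (D s e)) has_real_derivative (D t e - \<bar>current t e\<bar>) / (D t e)\<^sup>2)
    (at t within {0..})"
proof -
  have "((\<lambda>s. inverse (D s e)) has_real_derivative
      - ((\<bar>current t e\<bar> - D t e) * inverse (D t e ^ Suc (Suc 0)))) (at t within {0..})"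
    by (rule DERIV_inverse_fun[OF diameter_has_derivative[OF assms]])
      (use diameter_pos[OF assms] in auto)
  moreover have "- ((\<bar>current t e\<bar> - D t e) * inverse (D t e ^ Suc (Suc 0))) =
      (D t e - \<bar>current t e\<bar>) / (D t e)\<^sup>2"
    by (simp add: divide_inverse power2_eq_square algebra_simps)
  ultimately show ?thesis by simp
qed

lemma energy_increment_bounds:
  assumes s: "s \<ge> 0" and t: "t \<ge> 0"
  shows "(\<Sum>e\<in>E. L e * (current s e)\<^sup>2 * (inverse (D s e) - inverse (D t e))) \<le> energy s - energy t"
    and "energy s - energy t \<le> (\<Sum>e\<in>E. L e * (current t e)\<^sup>2 * (inverse (D s e) - inverse (D t e)))"
proof -
  have split: "(\<Sum>e\<in>E. L e * (current r e)\<^sup>2 * (inverse (D s e) - inverse (D t e))) =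
      (\<Sum>e\<in>E. L e * (current r e)\<^sup>2 / D s e) - (\<Sum>e\<in>E. L e * (current r e)\<^sup>2 / D t e)" for r
    by (simp add: sum_subtractf[symmetric] right_diff_distrib divide_inverse)
  show "(\<Sum>e\<in>E. L e * (current s e)\<^sup>2 * (inverse (D s e) - inverse (D t e))) \<le> energy s - energy t"
    using energy_le_flow_energy[OF t current_feasible[OF s]] unfolding split energy_def by simp
  show "energy s - energy t \<le> (\<Sum>e\<in>E. L e * (current t e)\<^sup>2 * (inverse (D s e) - inverse (D t e)))"
    using energy_le_flow_energy[OF s current_feasible[OF t]] unfolding split energy_def by simp
qed

text \<open>The difference quotient of the energy is squeezed between those of the two bounds above,
  which converge to the same limit because Q is continuous.\<close>

lemma energy_has_derivative:
  assumes t: "t \<ge> 0"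
  shows "(energy has_real_derivative
      (\<Sum>e\<in>E. L e * (current t e)\<^sup>2 * ((D t e - \<bar>current t e\<bar>) / (D t e)\<^sup>2))) (at t within {0..})"
    (is "(_ has_real_derivative ?E') _")
proof -
  define F where "F = at t within {0::real..}"
  define h where "h s e = (inverse (D s e) - inverse (D t e)) / (s - t)" for s e
  define upper where "upper s = (\<Sum>e\<in>E. L e * (current t e)\<^sup>2 * h s e)" for s
  define lower where "lower s = (\<Sum>e\<in>E. L e * (current s e)\<^sup>2 * h s e)" for s
  have h: "((\<lambda>s. h s e) \<longlongrightarrow> (D t e - \<bar>current t e\<bar>) / (D t e)\<^sup>2) F" if "e \<in> E" for e
    using inverse_diameter_has_derivative[OF t that]
    unfolding h_def F_def has_field_derivative_iff by simp
  have upper_lim: "(upper \<longlongrightarrow> ?E') F"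
    unfolding upper_def by (intro tendsto_sum tendsto_mult tendsto_const h)
  have lower_lim: "(lower \<longlongrightarrow> ?E') F"
    unfolding lower_def
    by (intro tendsto_sum tendsto_mult tendsto_const tendsto_power h current_tendsto[OF t, folded F_def])
  have min_lim: "((\<lambda>s. min (upper s) (lower s)) \<longlongrightarrow> ?E') F"
    using tendsto_min[OF upper_lim lower_lim] by simp
  have max_lim: "((\<lambda>s. max (upper s) (lower s)) \<longlongrightarrow> ?E') F"
    using tendsto_max[OF upper_lim lower_lim] by simp
  have "eventually (\<lambda>s. s \<ge> 0 \<and> s \<noteq> t) F"
    unfolding F_def eventually_at_filter by (rule always_eventually) simp
  then have "eventually (\<lambda>s. min (upper s) (lower s) \<le> (energy s - energy t) / (s - t) \<and>
      (energy s - energy t) / (s - t) \<le> max (upper s) (lower s)) F"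
    (is "eventually (\<lambda>s. ?lo s \<and> ?hi s) F")
  proof eventually_elim
    case (elim s)
    have scaled: "(s - t) * (\<Sum>e\<in>E. L e * (current r e)\<^sup>2 * h s e) =
        (\<Sum>e\<in>E. L e * (current r e)\<^sup>2 * (inverse (D s e) - inverse (D t e)))" for r
      using elim unfolding sum_distrib_left h_def by (intro sum.cong refl) simp
    have bounds: "(s - t) * lower s \<le> energy s - energy t" "energy s - energy t \<le> (s - t) * upper s"
      using energy_increment_bounds[of s, OF _ t] elim unfolding lower_def upper_def scaled by auto
    from quotient_between_min_max[OF bounds] elim show ?case by simp
  qed
  then have "eventually ?lo F" "eventually ?hi F" unfolding eventually_conj_iff by blast+
  from tendsto_sandwich[OF this min_lim max_lim]
  have "((\<lambda>s. (energy s - energy t) / (s - t)) \<longlongrightarrow> ?E') F" .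
  then show ?thesis unfolding F_def has_field_derivative_iff .
qed

section \<open>The Lyapunov function\<close>

definition lyapunov :: "real \<Rightarrow> real" where
  "lyapunov t = cost t + energy t"

definition dissipation :: "real \<Rightarrow> real" where
  "dissipation t =
     (\<Sum>e\<in>E. L e * (\<bar>current t e\<bar> - D t e)\<^sup>2 * (\<bar>current t e\<bar> + D t e) / (D t e)\<^sup>2)"

lemma lyapunov_has_derivative:
  assumes t: "t \<ge> 0"
  shows "(lyapunov has_real_derivative - dissipation t) (at t within {0..})"
proof -
  have "(cost has_real_derivative (\<Sum>e\<in>E. L e * (\<bar>current t e\<bar> - D t e))) (at t within {0..})"
    unfolding cost_def[abs_def] by (intro DERIV_sum DERIV_cmult diameter_has_derivative t)
  from DERIV_add[OF this energy_has_derivative[OF t]]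
  have "(lyapunov has_real_derivative (\<Sum>e\<in>E. L e * (\<bar>current t e\<bar> - D t e)) +
      (\<Sum>e\<in>E. L e * (current t e)\<^sup>2 * ((D t e - \<bar>current t e\<bar>) / (D t e)\<^sup>2))) (at t within {0..})"
    unfolding lyapunov_def[abs_def] .
  moreover have "(\<Sum>e\<in>E. L e * (\<bar>current t e\<bar> - D t e)) +
      (\<Sum>e\<in>E. L e * (current t e)\<^sup>2 * ((D t e - \<bar>current t e\<bar>) / (D t e)\<^sup>2)) = - dissipation t"
    unfolding dissipation_def sum.distrib[symmetric] sum_negf[symmetric]
    by (rule sum.cong[OF refl], rule dissipation_identity, rule diameter_pos[OF t])
  ultimately show ?thesis by simp
qed

lemma dissipation_term_nonneg:
  "t \<ge> 0 \<Longrightarrow> e \<in> E \<Longrightarrow>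
    0 \<le> L e * (\<bar>current t e\<bar> - D t e)\<^sup>2 * (\<bar>current t e\<bar> + D t e) / (D t e)\<^sup>2"
  using L_pos diameter_pos[of t e] by (intro divide_nonneg_nonneg mult_nonneg_nonneg) auto

lemma dissipation_nonneg: "t \<ge> 0 \<Longrightarrow> dissipation t \<ge> 0"
  unfolding dissipation_def by (intro sum_nonneg dissipation_term_nonneg)

lemma dissipation_term_le:
  "t \<ge> 0 \<Longrightarrow> e \<in> E \<Longrightarrow>
    L e * (\<bar>current t e\<bar> - D t e)\<^sup>2 * (\<bar>current t e\<bar> + D t e) / (D t e)\<^sup>2 \<le> dissipation t"
  unfolding dissipation_def by (rule member_le_sum[OF _ _ finite_E]) (auto intro: dissipation_term_nonneg)

lemma dissipation_continuous: "continuous_on {0..} dissipation"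
  unfolding continuous_on_def dissipation_def
  by (intro ballI tendsto_intros current_tendsto diameter_tendsto) (auto dest: diameter_pos)

lemma lyapunov_decrease_has_integral:
  assumes "0 \<le> a" "a \<le> c"
  shows "(dissipation has_integral lyapunov a - lyapunov c) {a..c}"
proof -
  have "((\<lambda>x. - dissipation x) has_integral lyapunov c - lyapunov a) {a..c}"
    using assms by (intro fundamental_theorem_of_calculus)
      (auto simp: has_real_derivative_iff_has_vector_derivative[symmetric]
        intro!: has_field_derivative_subset[OF lyapunov_has_derivative])
  from has_integral_neg[OF this] show ?thesis by simp
qed

lemma lyapunov_antimono: "0 \<le> a \<Longrightarrow> a \<le> c \<Longrightarrow> lyapunov c \<le> lyapunov a"
  using has_integral_nonneg[OF lyapunov_decrease_has_integral, of a c] dissipation_nonneg by auto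

lemma lyapunov_nonneg: "t \<ge> 0 \<Longrightarrow> lyapunov t \<ge> 0"
  unfolding lyapunov_def using cost_nonneg energy_nonneg by simp

lemma diameter_le:
  assumes "t \<ge> 0" "e \<in> E"
  shows "D t e \<le> lyapunov 0 / L e"
proof -
  have "L e * D t e \<le> cost t"
    unfolding cost_def
    by (rule member_le_sum[OF assms(2) _ finite_E])
      (use L_pos diameter_pos[OF assms(1)] in \<open>auto intro: less_imp_le\<close>)
  also have "\<dots> \<le> lyapunov t" unfolding lyapunov_def using energy_nonneg[OF assms(1)] by simp
  also have "\<dots> \<le> lyapunov 0" by (rule lyapunov_antimono[OF order_refl assms(1)])
  finally show ?thesis using L_pos assms(2) by (simp add: field_simps)
qed

lemma energy_le_lyapunov_0: "t \<ge> 0 \<Longrightarrow> energy t \<le> lyapunov 0"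
  using lyapunov_antimono[of 0 t] cost_nonneg[of t] unfolding lyapunov_def by simp

lemma abs_current_le:
  assumes "t \<ge> 0" "e \<in> E"
  shows "\<bar>current t e\<bar> \<le> lyapunov 0 / L e"
proof -
  have L: "L e > 0" using L_pos assms(2) by auto
  have "L e * (current t e)\<^sup>2 \<le> D t e * energy t" by (rule current_sq_le[OF assms])
  also have "\<dots> \<le> (lyapunov 0 / L e) * lyapunov 0"
    using diameter_le[OF assms] energy_le_lyapunov_0[OF assms(1)] energy_nonneg[OF assms(1)]
      diameter_pos[OF assms]
    by (intro mult_mono) auto
  finally have "(current t e)\<^sup>2 \<le> (lyapunov 0 / L e)\<^sup>2"
    using L by (simp add: field_simps power2_eq_square)
  moreover have "0 \<le> lyapunov 0 / L e" using lyapunov_nonneg[of 0] L by simp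
  ultimately show ?thesis by (metis abs_le_square_iff abs_of_nonneg)
qed

lemma abs_potential_drop_le:
  assumes "t \<ge> 0" "e \<in> E" "0 < \<delta>" "\<delta> \<le> D t e"
  shows "\<bar>potential t (src e) - potential t (tgt e)\<bar> \<le> lyapunov 0 / \<delta>"
proof -
  have L: "L e > 0" using L_pos assms(2) by simp
  have D: "D t e > 0" using assms(3,4) by simp
  have "\<bar>potential t (src e) - potential t (tgt e)\<bar> = L e * \<bar>current t e\<bar> / D t e"
    unfolding potential_drop[OF assms(1,2)] using L D by (simp add: abs_mult)
  also have "\<dots> \<le> L e * (lyapunov 0 / L e) / D t e"
    using abs_current_le[OF assms(1,2)] L D by (intro divide_right_mono mult_left_mono) auto
  also have "\<dots> = lyapunov 0 / D t e" using L by simp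
  also have "\<dots> \<le> lyapunov 0 / \<delta>"
    using assms(3,4) lyapunov_nonneg[of 0] by (intro divide_left_mono) auto
  finally show ?thesis .
qed

lemma diameter_lipschitz:
  assumes "0 \<le> a" "a \<le> c" "e \<in> E"
  shows "\<bar>D c e - D a e\<bar> \<le> (2 * lyapunov 0 / L e) * (c - a)"
proof -
  have "norm (D c e - D a e) \<le> (2 * lyapunov 0 / L e) * norm (c - a)"
  proof (rule field_differentiable_bound[where S = "{0..}"])
    fix s :: real assume "s \<in> {0..}"
    then have s: "s \<ge> 0" by simp
    show "((\<lambda>s. D s e) has_field_derivative \<bar>current s e\<bar> - D s e) (at s within {0..})"
      by (rule diameter_has_derivative[OF s assms(3)])
    show "norm (\<bar>current s e\<bar> - D s e) \<le> 2 * lyapunov 0 / L e"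
      using abs_current_le[OF s assms(3)] diameter_le[OF s assms(3)] diameter_pos[OF s assms(3)]
      by auto
  qed (use assms in auto)
  then show ?thesis using assms by simp
qed

definition lyapunov_limit :: real where
  "lyapunov_limit = Inf (lyapunov ` {0..})"

lemma lyapunov_limit_le: "t \<ge> 0 \<Longrightarrow> lyapunov_limit \<le> lyapunov t"
  unfolding lyapunov_limit_def by (rule cInf_lower) (auto intro: bdd_belowI[of _ 0] lyapunov_nonneg)

lemma lyapunov_tendsto: "(lyapunov \<longlongrightarrow> lyapunov_limit) at_top"
proof (rule order_tendstoI)
  fix a assume "a < lyapunov_limit"
  then show "eventually (\<lambda>t. a < lyapunov t) at_top"
    unfolding eventually_at_top_linorder using lyapunov_limit_le by (intro exI[of _ 0]) force
next
  fix a assume "lyapunov_limit < a"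
  then obtain t0 where "t0 \<ge> 0" "lyapunov t0 < a"
    unfolding lyapunov_limit_def
    by (subst (asm) cInf_less_iff) (auto intro: bdd_belowI[of _ 0] lyapunov_nonneg)
  then show "eventually (\<lambda>t. lyapunov t < a) at_top"
    unfolding eventually_at_top_linorder using lyapunov_antimono[of t0]
    by (intro exI[of _ t0]) (auto intro: le_less_trans)
qed

lemma exists_small_dissipation:
  assumes "0 \<le> a" "0 < d"
  shows "\<exists>s\<in>{a..a+d}. dissipation s * d \<le> lyapunov a - lyapunov (a + d)"
proof -
  have "continuous_on {a..a+d} dissipation"
    using assms by (intro continuous_on_subset[OF dissipation_continuous]) auto
  then obtain s where s: "s \<in> {a..a+d}" "\<forall>y\<in>{a..a+d}. dissipation s \<le> dissipation y"
    using continuous_attains_inf[of "{a..a+d}" dissipation] assms by auto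
  have "dissipation s * d \<le> lyapunov a - lyapunov (a + d)"
    using has_integral_le[OF has_integral_const_real[of "dissipation s" a "a+d"]
        lyapunov_decrease_has_integral[of a "a+d"]] s assms
    by (auto simp: mult.commute)
  with s show ?thesis by blast
qed

lemma current_diameter_gap_sq_le:
  assumes t: "t \<ge> 0" and e: "e \<in> E"
  shows "(\<bar>current t e\<bar> - D t e)\<^sup>2 \<le> lyapunov 0 * dissipation t / (L e)\<^sup>2"
proof -
  have L: "L e > 0" using L_pos e by auto
  have D: "D t e > 0" by (rule diameter_pos[OF t e])
  have "L e * (\<bar>current t e\<bar> - D t e)\<^sup>2 / D t e =
      L e * (\<bar>current t e\<bar> - D t e)\<^sup>2 * D t e / (D t e)\<^sup>2"
    using D by (simp add: power2_eq_square)
  also have "\<dots> \<le> L e * (\<bar>current t e\<bar> - D t e)\<^sup>2 * (\<bar>current t e\<bar> + D t e) / (D t e)\<^sup>2"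
    using L by (intro divide_right_mono mult_left_mono) auto
  also have "\<dots> \<le> dissipation t" by (rule dissipation_term_le[OF t e])
  finally have "(\<bar>current t e\<bar> - D t e)\<^sup>2 \<le> D t e * dissipation t / L e"
    using L D by (simp add: field_simps)
  also have "\<dots> \<le> (lyapunov 0 / L e) * dissipation t / L e"
    using diameter_le[OF t e] dissipation_nonneg[OF t] L
    by (intro divide_right_mono mult_right_mono) auto
  finally show ?thesis by (simp add: power2_eq_square)
qed

lemma abs_energy_minus_cost_le:
  assumes t: "t \<ge> 0"
  shows "\<bar>energy t - cost t\<bar> \<le> real (card E) * sqrt (2 * lyapunov 0 * dissipation t)"
proof -
  have term_le: "\<bar>L e * (current t e)\<^sup>2 / D t e - L e * D t e\<bar> \<le> sqrt (2 * lyapunov 0 * dissipation t)"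
    if e: "e \<in> E" for e
  proof -
    have L: "L e > 0" using L_pos e by auto
    have D: "D t e > 0" by (rule diameter_pos[OF t e])
    define c where "c = \<bar>current t e\<bar>"
    have c_sq: "(current t e)\<^sup>2 = c\<^sup>2" unfolding c_def by simp
    have "(L e * (current t e)\<^sup>2 / D t e - L e * D t e)\<^sup>2 =
        (L e * (c - D t e)\<^sup>2 * (c + D t e) / (D t e)\<^sup>2) * (L e * (c + D t e))"
      unfolding c_sq using D by (simp add: field_simps power2_eq_square)
    also have "\<dots> \<le> dissipation t * (2 * lyapunov 0)"
    proof (rule mult_mono)
      show "L e * (c - D t e)\<^sup>2 * (c + D t e) / (D t e)\<^sup>2 \<le> dissipation t"
        unfolding c_def by (rule dissipation_term_le[OF t e])
      have "c + D t e \<le> 2 * (lyapunov 0 / L e)"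
        using abs_current_le[OF t e] diameter_le[OF t e] unfolding c_def by simp
      then show "L e * (c + D t e) \<le> 2 * lyapunov 0" using L by (simp add: field_simps)
      show "0 \<le> dissipation t" by (rule dissipation_nonneg[OF t])
      show "0 \<le> L e * (c + D t e)" using L D unfolding c_def by simp
    qed
    finally show ?thesis by (simp add: real_le_rsqrt mult.commute mult.left_commute)
  qed
  have "\<bar>energy t - cost t\<bar> = \<bar>\<Sum>e\<in>E. L e * (current t e)\<^sup>2 / D t e - L e * D t e\<bar>"
    unfolding energy_def cost_def by (simp add: sum_subtractf)
  also have "\<dots> \<le> (\<Sum>e\<in>E. \<bar>L e * (current t e)\<^sup>2 / D t e - L e * D t e\<bar>)" by (rule sum_abs)
  also have "\<dots> \<le> (\<Sum>e\<in>E. sqrt (2 * lyapunov 0 * dissipation t))" by (intro sum_mono term_le)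
  finally show ?thesis by simp
qed

section \<open>Accumulation points are equilibria\<close>

lemma diameter_difference_tendsto_0:
  assumes tn0: "\<forall>n. tn n \<ge> 0" and sn: "\<forall>n. sn n \<in> {tn n..tn n + d n}" and d: "d \<longlonglongrightarrow> 0"
    and e: "e \<in> E"
  shows "(\<lambda>n. D (sn n) e - D (tn n) e) \<longlonglongrightarrow> 0"
proof (rule Lim_null_comparison)
  show "eventually (\<lambda>n. norm (D (sn n) e - D (tn n) e) \<le> (2 * lyapunov 0 / L e) * d n) sequentially"
  proof (rule always_eventually, rule allI)
    fix n
    have "\<bar>D (sn n) e - D (tn n) e\<bar> \<le> (2 * lyapunov 0 / L e) * (sn n - tn n)"
      using diameter_lipschitz[OF tn0[rule_format, of n] _ e, of "sn n"] sn[rule_format, of n] by auto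
    also have "\<dots> \<le> (2 * lyapunov 0 / L e) * d n"
      using sn[rule_format, of n] lyapunov_nonneg[of 0] L_pos e by (intro mult_left_mono) auto
    finally show "norm (D (sn n) e - D (tn n) e) \<le> (2 * lyapunov 0 / L e) * d n" by simp
  qed
  show "(\<lambda>n. (2 * lyapunov 0 / L e) * d n) \<longlonglongrightarrow> 0"
    using tendsto_mult[OF tendsto_const[of "2 * lyapunov 0 / L e"] d] by simp
qed

text \<open>Choose s_n in a window [t_n, t_n + d_n] where the dissipation is minimal: its integral over
  the window is at most V(t_n) - inf V, and d_n is at least the square root of this quantity.\<close>

lemma times_with_vanishing_dissipation:
  assumes tn0: "\<forall>n. tn n \<ge> 0" and tn: "filterlim tn at_top sequentially"
  obtains sn where "\<forall>n. sn n \<ge> 0" "filterlim sn at_top sequentially"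
    "(\<lambda>n. dissipation (sn n)) \<longlonglongrightarrow> 0" "\<forall>e\<in>E. (\<lambda>n. D (sn n) e - D (tn n) e) \<longlonglongrightarrow> 0"
proof -
  define x where "x n = lyapunov (tn n) - lyapunov_limit" for n
  have x_nonneg: "x n \<ge> 0" for n unfolding x_def using lyapunov_limit_le tn0 by auto
  have "(\<lambda>n. lyapunov (tn n)) \<longlonglongrightarrow> lyapunov_limit" by (rule filterlim_compose[OF lyapunov_tendsto tn])
  from tendsto_diff[OF this tendsto_const[of lyapunov_limit]] have x_lim: "x \<longlonglongrightarrow> 0"
    unfolding x_def by simp
  define d where "d n = sqrt (x n) + inverse (real (Suc n))" for n
  have d_pos: "d n > 0" for n unfolding d_def using x_nonneg by (simp add: add_nonneg_pos)
  have d_lim: "d \<longlonglongrightarrow> 0"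
    unfolding d_def using tendsto_add[OF tendsto_real_sqrt[OF x_lim] LIMSEQ_inverse_real_of_nat] by simp
  have "\<forall>n. \<exists>s\<in>{tn n..tn n + d n}. dissipation s * d n \<le> lyapunov (tn n) - lyapunov (tn n + d n)"
    using exists_small_dissipation tn0 d_pos by blast
  then obtain sn where sn: "\<And>n. sn n \<in> {tn n..tn n + d n}"
    and sn_diss: "\<And>n. dissipation (sn n) * d n \<le> lyapunov (tn n) - lyapunov (tn n + d n)"
    by metis
  have sn0: "\<forall>n. sn n \<ge> 0" using sn tn0 by (meson atLeastAtMost_iff order_trans)
  have diss_le: "dissipation (sn n) \<le> sqrt (x n)" for n
  proof -
    have "lyapunov (tn n + d n) \<ge> lyapunov_limit"
      using lyapunov_limit_le tn0 d_pos[of n] by (simp add: less_imp_le)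
    then have "dissipation (sn n) * d n \<le> x n" using sn_diss[of n] unfolding x_def by linarith
    also have "\<dots> = sqrt (x n) * sqrt (x n)" using x_nonneg[of n] by simp
    also have "\<dots> \<le> sqrt (x n) * d n" unfolding d_def using x_nonneg[of n] by (intro mult_left_mono) auto
    finally show ?thesis using d_pos[of n] by simp
  qed
  have "(\<lambda>n. dissipation (sn n)) \<longlonglongrightarrow> 0"
    by (rule tendsto_sandwich[of "\<lambda>_. 0" _ _ "\<lambda>n. sqrt (x n)"])
      (use dissipation_nonneg sn0 diss_le tendsto_real_sqrt[OF x_lim] in auto)
  moreover have "filterlim sn at_top sequentially"
    by (rule filterlim_at_top_mono[OF tn]) (use sn in auto)
  moreover have "\<forall>e\<in>E. (\<lambda>n. D (sn n) e - D (tn n) e) \<longlonglongrightarrow> 0"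
    using diameter_difference_tendsto_0[OF tn0 _ d_lim] sn by blast
  ultimately show thesis using sn0 that by blast
qed

lemma potential_drops_eventually_bounded:
  assumes sn0: "\<forall>n. sn n \<ge> 0" and Ds: "\<forall>e\<in>E. (\<lambda>n. D (sn n) e) \<longlonglongrightarrow> Db e"
  obtains B where "eventually (\<lambda>n. \<forall>e\<in>{e\<in>E. Db e > 0}.
      \<bar>potential (sn n) (src e) - potential (sn n) (tgt e)\<bar> \<le> B) sequentially"
proof -
  define Ep where "Ep = {e\<in>E. Db e > 0}"
  have finite_Ep: "finite Ep" unfolding Ep_def using finite_E by simp
  define B where "B = (\<Sum>e\<in>Ep. 2 * lyapunov 0 / Db e)"
  have "eventually (\<lambda>n. \<forall>e\<in>Ep. Db e / 2 \<le> D (sn n) e) sequentially"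
  proof (rule eventually_ball_finite[OF finite_Ep], rule ballI)
    fix e assume "e \<in> Ep"
    then have "e \<in> E" "Db e / 2 < Db e" unfolding Ep_def by auto
    from order_tendstoD(1)[OF Ds[rule_format, OF this(1)] this(2)]
    show "eventually (\<lambda>n. Db e / 2 \<le> D (sn n) e) sequentially" by (auto elim: eventually_mono)
  qed
  then have "eventually (\<lambda>n. \<forall>e\<in>Ep. \<bar>potential (sn n) (src e) - potential (sn n) (tgt e)\<bar> \<le> B) sequentially"
  proof eventually_elim
    case (elim n)
    show ?case
    proof
      fix e assume e: "e \<in> Ep"
      then have "e \<in> E" "Db e > 0" unfolding Ep_def by auto
      then have "\<bar>potential (sn n) (src e) - potential (sn n) (tgt e)\<bar> \<le> lyapunov 0 / (Db e / 2)"
        using elim e sn0 by (intro abs_potential_drop_le) auto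
      also have "\<dots> = 2 * lyapunov 0 / Db e" by simp
      also have "\<dots> \<le> B" unfolding B_def
        by (rule member_le_sum[OF e _ finite_Ep]) (use lyapunov_nonneg[of 0] in \<open>auto simp: Ep_def\<close>)
      finally show "\<bar>potential (sn n) (src e) - potential (sn n) (tgt e)\<bar> \<le> B" .
    qed
  qed
  then show thesis unfolding Ep_def by (rule that)
qed

text \<open>The potentials, normalised at a representative of their component in the subgraph of edges
  with positive limit diameter, are eventually bounded.\<close>

lemma convergent_subsequence_current_potential:
  assumes sn0: "\<forall>n. sn n \<ge> 0" and Ds: "\<forall>e\<in>E. (\<lambda>n. D (sn n) e) \<longlonglongrightarrow> Db e"
  obtains r Qb pb where "strict_mono r" "\<forall>e\<in>E. (\<lambda>n. current (sn (r n)) e) \<longlonglongrightarrow> Qb e"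
    "\<forall>e\<in>E. Db e > 0 \<longrightarrow> (\<lambda>n. potential (sn (r n)) (src e) - potential (sn (r n)) (tgt e))
        \<longlonglongrightarrow> pb (src e) - pb (tgt e)"
proof -
  have "\<bar>current (sn n) e\<bar> \<le> lyapunov 0 / L e" if "e \<in> E" for n e
    using sn0 abs_current_le that by simp
  then obtain r1 Qb where r1: "strict_mono r1"
    and Q_lim: "\<forall>e\<in>E. (\<lambda>n. current (sn (r1 n)) e) \<longlonglongrightarrow> Qb e"
    by (rule finite_bounded_imp_convergent_subsequence[OF finite_E])
  define Ep where "Ep = {e\<in>E. Db e > 0}"
  obtain rep k where rep: "\<And>e. e \<in> Ep \<Longrightarrow> rep (src e) = rep (tgt e)"
    and drift: "\<And>p B v. \<forall>e\<in>Ep. \<bar>p (src e) - p (tgt e)\<bar> \<le> B \<Longrightarrow> \<bar>p v - p (rep v)\<bar> \<le> real (k v) * B"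
    using component_representatives[of Ep src tgt] by blast
  have "\<forall>n. sn (r1 n) \<ge> 0" using sn0 by simp
  moreover have "\<forall>e\<in>E. (\<lambda>n. D (sn (r1 n)) e) \<longlonglongrightarrow> Db e"
  proof
    fix e assume "e \<in> E"
    from LIMSEQ_subseq_LIMSEQ[OF Ds[rule_format, OF this] r1]
    show "(\<lambda>n. D (sn (r1 n)) e) \<longlonglongrightarrow> Db e" by (simp add: o_def)
  qed
  ultimately obtain B where "eventually (\<lambda>n. \<forall>e\<in>Ep.
      \<bar>potential (sn (r1 n)) (src e) - potential (sn (r1 n)) (tgt e)\<bar> \<le> B) sequentially"
    unfolding Ep_def by (rule potential_drops_eventually_bounded)
  then have "eventually (\<lambda>n. \<forall>v\<in>N.
      \<bar>potential (sn (r1 n)) v - potential (sn (r1 n)) (rep v)\<bar> \<le> real (k v) * B) sequentially"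
    by eventually_elim (simp add: drift)
  then obtain r2 pb where r2: "strict_mono r2" and P_lim: "\<forall>v\<in>N.
      (\<lambda>n. potential (sn (r1 (r2 n))) v - potential (sn (r1 (r2 n))) (rep v)) \<longlonglongrightarrow> pb v"
    by (rule eventually_bounded_imp_convergent_subsequence[OF finite_N])
  show thesis
  proof (rule that[of "r1 \<circ> r2" Qb pb])
    show "strict_mono (r1 \<circ> r2)" using r1 r2 by (rule strict_mono_o)
    show "\<forall>e\<in>E. (\<lambda>n. current (sn ((r1 \<circ> r2) n)) e) \<longlonglongrightarrow> Qb e"
    proof
      fix e assume "e \<in> E"
      from LIMSEQ_subseq_LIMSEQ[OF Q_lim[rule_format, OF this] r2]
      show "(\<lambda>n. current (sn ((r1 \<circ> r2) n)) e) \<longlonglongrightarrow> Qb e" by (simp add: o_def)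
    qed
    show "\<forall>e\<in>E. Db e > 0 \<longrightarrow> (\<lambda>n. potential (sn ((r1 \<circ> r2) n)) (src e) - potential (sn ((r1 \<circ> r2) n)) (tgt e))
        \<longlonglongrightarrow> pb (src e) - pb (tgt e)"
    proof (intro ballI impI)
      fix e assume e: "e \<in> E" "Db e > 0"
      then have "rep (src e) = rep (tgt e)" by (intro rep) (simp add: Ep_def)
      moreover have "(\<lambda>n. (potential (sn (r1 (r2 n))) (src e) - potential (sn (r1 (r2 n))) (rep (src e))) -
          (potential (sn (r1 (r2 n))) (tgt e) - potential (sn (r1 (r2 n))) (rep (tgt e))))
          \<longlonglongrightarrow> pb (src e) - pb (tgt e)"
        using P_lim endpoints e(1) by (intro tendsto_diff) auto
      ultimately show "(\<lambda>n. potential (sn ((r1 \<circ> r2) n)) (src e) - potential (sn ((r1 \<circ> r2) n)) (tgt e))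
          \<longlonglongrightarrow> pb (src e) - pb (tgt e)" by (simp add: o_def)
    qed
  qed
qed

lemma limit_current_feasible:
  assumes sn0: "\<forall>n. sn n \<ge> 0" and Q_lim: "\<forall>e\<in>E. (\<lambda>n. current (sn n) e) \<longlonglongrightarrow> Qb e"
  shows "feasible_flow N E src tgt b Qb"
  unfolding feasible_flow_def
proof
  fix v assume v: "v \<in> N"
  have "(\<lambda>n. net_outflow E src tgt (current (sn n)) v) \<longlonglongrightarrow> net_outflow E src tgt Qb v"
    unfolding net_outflow_def using Q_lim by (intro tendsto_diff tendsto_sum) auto
  moreover have "net_outflow E src tgt (current (sn n)) v = b v" for n
    using current_feasible[OF sn0[rule_format, of n]] v unfolding feasible_flow_def by blast
  ultimately show "net_outflow E src tgt Qb v = b v" by (simp add: LIMSEQ_const_iff)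
qed

lemma limit_abs_current_eq_diameter:
  assumes sn0: "\<forall>n. sn n \<ge> 0" and diss: "(\<lambda>n. dissipation (sn n)) \<longlonglongrightarrow> 0"
    and Q_lim: "(\<lambda>n. current (sn n) e) \<longlonglongrightarrow> Qb" and D_lim: "(\<lambda>n. D (sn n) e) \<longlonglongrightarrow> Db"
    and e: "e \<in> E"
  shows "\<bar>Qb\<bar> = Db"
proof -
  have "(\<lambda>n. \<bar>current (sn n) e\<bar> - D (sn n) e) \<longlonglongrightarrow> 0"
  proof (rule Lim_null_comparison)
    show "eventually (\<lambda>n. norm (\<bar>current (sn n) e\<bar> - D (sn n) e) \<le>
        sqrt (lyapunov 0 * dissipation (sn n) / (L e)\<^sup>2)) sequentially"
      using current_diameter_gap_sq_le[OF sn0[rule_format] e]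
      by (intro always_eventually allI) (simp add: real_le_rsqrt)
    show "(\<lambda>n. sqrt (lyapunov 0 * dissipation (sn n) / (L e)\<^sup>2)) \<longlonglongrightarrow> 0"
      using tendsto_real_sqrt[OF tendsto_divide_zero[OF tendsto_mult_right_zero[OF diss]]] by simp
  qed
  moreover have "(\<lambda>n. \<bar>current (sn n) e\<bar> - D (sn n) e) \<longlonglongrightarrow> \<bar>Qb\<bar> - Db"
    using Q_lim D_lim by (intro tendsto_intros)
  ultimately show ?thesis using LIMSEQ_unique by fastforce
qed

lemma limit_of_vanishing_dissipation_is_equilibrium:
  assumes sn0: "\<forall>n. sn n \<ge> 0" and diss: "(\<lambda>n. dissipation (sn n)) \<longlonglongrightarrow> 0"
    and Ds: "\<forall>e\<in>E. (\<lambda>n. D (sn n) e) \<longlonglongrightarrow> Db e"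
  shows "equilibrium N E src tgt b L Db"
proof -
  obtain r Qb pb where r: "strict_mono r" and Q_lim: "\<forall>e\<in>E. (\<lambda>n. current (sn (r n)) e) \<longlonglongrightarrow> Qb e"
    and drop_lim: "\<forall>e\<in>E. Db e > 0 \<longrightarrow> (\<lambda>n. potential (sn (r n)) (src e) - potential (sn (r n)) (tgt e))
        \<longlonglongrightarrow> pb (src e) - pb (tgt e)"
    using convergent_subsequence_current_potential[OF sn0 Ds] by blast
  have sn0': "\<forall>n. sn (r n) \<ge> 0" using sn0 by simp
  have D_lim: "(\<lambda>n. D (sn (r n)) e) \<longlonglongrightarrow> Db e" if "e \<in> E" for e
    using LIMSEQ_subseq_LIMSEQ[OF Ds[rule_format, OF that] r] by (simp add: o_def)
  have diss': "(\<lambda>n. dissipation (sn (r n))) \<longlonglongrightarrow> 0"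
    using LIMSEQ_subseq_LIMSEQ[OF diss r] by (simp add: o_def)
  have abs_Qb: "\<bar>Qb e\<bar> = Db e" if "e \<in> E" for e
    using limit_abs_current_eq_diameter[OF sn0' diss' _ D_lim] Q_lim that by blast
  have ohm: "Qb e = Db e * (pb (src e) - pb (tgt e)) / L e" if e: "e \<in> E" for e
  proof (cases "Db e > 0")
    case True
    have "(\<lambda>n. L e * current (sn (r n)) e / D (sn (r n)) e) \<longlonglongrightarrow> L e * Qb e / Db e"
      using Q_lim D_lim e True by (intro tendsto_intros) auto
    moreover have "L e * current (sn (r n)) e / D (sn (r n)) e =
        potential (sn (r n)) (src e) - potential (sn (r n)) (tgt e)" for n
      using potential_drop[OF sn0'[rule_format] e] by simp
    ultimately have "pb (src e) - pb (tgt e) = L e * Qb e / Db e"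
      using drop_lim e True LIMSEQ_unique by fastforce
    moreover have "L e > 0" using L_pos e by simp
    ultimately show ?thesis using True by (simp add: field_simps)
  next
    case False
    then have "Db e = 0" using abs_Qb[OF e] abs_ge_zero[of "Qb e"] by linarith
    with abs_Qb[OF e] show ?thesis by simp
  qed
  have "Db e \<ge> 0" if "e \<in> E" for e unfolding abs_Qb[OF that, symmetric] by simp
  with abs_Qb limit_current_feasible[OF sn0' Q_lim] ohm show ?thesis
    unfolding equilibrium_def is_current_def by (intro conjI exI[of _ Qb] exI[of _ pb] ballI) simp_all
qed

lemma lyapunov_limit_eq_twice_cost:
  assumes sn0: "\<forall>n. sn n \<ge> 0" and sn: "filterlim sn at_top sequentially"
    and diss: "(\<lambda>n. dissipation (sn n)) \<longlonglongrightarrow> 0" and Ds: "\<forall>e\<in>E. (\<lambda>n. D (sn n) e) \<longlonglongrightarrow> Db e"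
  shows "lyapunov_limit = 2 * equilibrium_cost E L Db"
proof -
  have cost_lim: "(\<lambda>n. cost (sn n)) \<longlonglongrightarrow> equilibrium_cost E L Db"
    unfolding cost_def equilibrium_cost_def using Ds by (intro tendsto_intros) auto
  have "(\<lambda>n. energy (sn n) - cost (sn n)) \<longlonglongrightarrow> 0"
  proof (rule Lim_null_comparison)
    show "eventually (\<lambda>n. norm (energy (sn n) - cost (sn n)) \<le>
        real (card E) * sqrt (2 * lyapunov 0 * dissipation (sn n))) sequentially"
      using abs_energy_minus_cost_le sn0 by (intro always_eventually) auto
    have "(\<lambda>n. sqrt (2 * lyapunov 0 * dissipation (sn n))) \<longlonglongrightarrow> 0"
      using tendsto_real_sqrt[OF tendsto_mult_right_zero[OF diss]] by simp
    from tendsto_mult_right_zero[OF this]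
    show "(\<lambda>n. real (card E) * sqrt (2 * lyapunov 0 * dissipation (sn n))) \<longlonglongrightarrow> 0" .
  qed
  from tendsto_add[OF tendsto_mult_left[OF cost_lim, of 2] this]
  have "(\<lambda>n. lyapunov (sn n)) \<longlonglongrightarrow> 2 * equilibrium_cost E L Db"
    unfolding lyapunov_def by simp
  moreover have "(\<lambda>n. lyapunov (sn n)) \<longlonglongrightarrow> lyapunov_limit"
    by (rule filterlim_compose[OF lyapunov_tendsto sn])
  ultimately show ?thesis using LIMSEQ_unique by blast
qed

lemma accumulation_point_is_equilibrium:
  assumes tn0: "\<forall>n. tn n \<ge> 0" and tn: "filterlim tn at_top sequentially"
    and D_lim: "\<forall>e\<in>E. (\<lambda>n. D (tn n) e) \<longlonglongrightarrow> Db e"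
  shows "equilibrium N E src tgt b L Db" and "lyapunov_limit = 2 * equilibrium_cost E L Db"
proof -
  obtain sn where sn0: "\<forall>n. sn n \<ge> 0" and sn: "filterlim sn at_top sequentially"
    and diss: "(\<lambda>n. dissipation (sn n)) \<longlonglongrightarrow> 0"
    and close: "\<forall>e\<in>E. (\<lambda>n. D (sn n) e - D (tn n) e) \<longlonglongrightarrow> 0"
    using times_with_vanishing_dissipation[OF tn0 tn] by blast
  have "(\<lambda>n. D (sn n) e) \<longlonglongrightarrow> Db e" if "e \<in> E" for e
    using tendsto_add[OF D_lim[rule_format, OF that] close[rule_format, OF that]] by simp
  then have "\<forall>e\<in>E. (\<lambda>n. D (sn n) e) \<longlonglongrightarrow> Db e" by blast
  with sn0 sn diss show "equilibrium N E src tgt b L Db" "lyapunov_limit = 2 * equilibrium_cost E L Db"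
    by (auto intro: limit_of_vanishing_dissipation_is_equilibrium lyapunov_limit_eq_twice_cost)
qed

lemma equilibrium_accumulation_point:
  fixes tn :: "nat \<Rightarrow> real"
  assumes tn0: "\<forall>n. tn n \<ge> 0" and tn: "filterlim tn at_top sequentially"
  obtains r Db where "strict_mono r" "\<forall>e\<in>E. (\<lambda>n. D (tn (r n)) e) \<longlonglongrightarrow> Db e"
    "equilibrium N E src tgt b L Db" "lyapunov_limit = 2 * equilibrium_cost E L Db"
proof -
  have "\<bar>D (tn n) e\<bar> \<le> lyapunov 0 / L e" if "e \<in> E" for n e
    using tn0 diameter_pos diameter_le that by (simp add: less_imp_le)
  then obtain r Db where r: "strict_mono r" and D_lim: "\<forall>e\<in>E. (\<lambda>n. D (tn (r n)) e) \<longlonglongrightarrow> Db e"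
    by (rule finite_bounded_imp_convergent_subsequence[OF finite_E])
  have "\<forall>n. tn (r n) \<ge> 0" using tn0 by simp
  moreover have "filterlim (\<lambda>n. tn (r n)) at_top sequentially"
    using filterlim_compose[OF tn filterlim_subseq[OF r]] .
  ultimately have "equilibrium N E src tgt b L Db" "lyapunov_limit = 2 * equilibrium_cost E L Db"
    by (rule accumulation_point_is_equilibrium[OF _ _ D_lim])+
  with r D_lim show thesis by (rule that)
qed

text \<open>All accumulation points of D(t) are equilibria of the same cost, hence equal.\<close>

lemma diameter_tendsto_equilibrium:
  assumes distinct_costs: "\<forall>D1 D2. equilibrium N E src tgt b L D1 \<and> equilibrium N E src tgt b L D2 \<and>
      (\<exists>e\<in>E. D1 e \<noteq> D2 e) \<longrightarrow> equilibrium_cost E L D1 \<noteq> equilibrium_cost E L D2"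
  obtains Ds where "equilibrium N E src tgt b L Ds" "\<forall>e\<in>E. ((\<lambda>t. D t e) \<longlongrightarrow> Ds e) at_top"
    "lyapunov_limit = 2 * equilibrium_cost E L Ds"
proof -
  obtain Ds where Ds: "equilibrium N E src tgt b L Ds" "lyapunov_limit = 2 * equilibrium_cost E L Ds"
    using equilibrium_accumulation_point[of real] filterlim_real_sequentially by auto
  have "((\<lambda>t. D t e) \<longlongrightarrow> Ds e) at_top" if e: "e \<in> E" for e
  proof (rule ccontr)
    assume "\<not> ((\<lambda>t. D t e) \<longlongrightarrow> Ds e) at_top"
    then obtain \<epsilon> where \<epsilon>: "\<epsilon> > 0" "\<not> eventually (\<lambda>t. dist (D t e) (Ds e) < \<epsilon>) at_top"
      unfolding tendsto_iff by auto
    then have "\<forall>n. \<exists>t. t \<ge> real n \<and> \<not> dist (D t e) (Ds e) < \<epsilon>"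
      unfolding eventually_at_top_linorder by blast
    then obtain tn where tn: "\<And>n. tn n \<ge> real n" "\<And>n. \<not> dist (D (tn n) e) (Ds e) < \<epsilon>"
      by metis
    have tn0: "\<forall>n. tn n \<ge> 0" using tn(1) of_nat_0_le_iff order_trans by blast
    have "filterlim tn at_top sequentially"
      by (rule filterlim_at_top_mono[OF filterlim_real_sequentially]) (use tn(1) in auto)
    then obtain r D2 where r: "strict_mono r" "\<forall>e\<in>E. (\<lambda>n. D (tn (r n)) e) \<longlonglongrightarrow> D2 e"
      and D2: "equilibrium N E src tgt b L D2" "lyapunov_limit = 2 * equilibrium_cost E L D2"
      using equilibrium_accumulation_point[OF tn0] by blast
    have "\<forall>e\<in>E. Ds e = D2 e" using distinct_costs Ds D2 by force
    with r(2) e have "(\<lambda>n. dist (D (tn (r n)) e) (Ds e)) \<longlonglongrightarrow> dist (Ds e) (Ds e)"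
      by (intro tendsto_intros) auto
    moreover have "eventually (\<lambda>n. \<epsilon> \<le> dist (D (tn (r n)) e) (Ds e)) sequentially"
      using tn(2) by (intro always_eventually) (auto simp: not_less)
    ultimately have "\<epsilon> \<le> dist (Ds e) (Ds e)" by (rule tendsto_lowerbound) simp
    with \<epsilon>(1) show False by simp
  qed
  with Ds that show thesis by blast
qed

section \<open>Optimality of the limit\<close>

lemma energy_le_weighted_flow:
  assumes t: "t \<ge> 0" and F: "feasible_flow N E src tgt b F"
  shows "energy t \<le> (\<Sum>e\<in>E. \<bar>F e\<bar> * (L e * \<bar>current t e\<bar> / D t e))"
proof -
  let ?drop = "\<lambda>e. potential t (src e) - potential t (tgt e)"
  have orth: "(\<Sum>e\<in>E. (F e - current t e) * ?drop e) = 0"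
    by (rule feasible_flows_difference_orthogonal[OF finite_E finite_N endpoints F current_feasible[OF t]])
  have "energy t = (\<Sum>e\<in>E. current t e * ?drop e)"
    unfolding energy_def by (intro sum.cong refl) (simp add: potential_drop[OF t] power2_eq_square)
  also have "\<dots> = (\<Sum>e\<in>E. F e * ?drop e)"
    using orth by (simp add: left_diff_distrib sum_subtractf)
  also have "\<dots> \<le> (\<Sum>e\<in>E. \<bar>F e\<bar> * (L e * \<bar>current t e\<bar> / D t e))"
  proof (rule sum_mono)
    fix e assume e: "e \<in> E"
    have "F e * ?drop e \<le> \<bar>F e * ?drop e\<bar>" by simp
    also have "\<dots> = \<bar>F e\<bar> * (L e * \<bar>current t e\<bar> / D t e)"
      unfolding potential_drop[OF t e] using L_pos[rule_format, OF e] diameter_pos[OF t e]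
      by (simp add: abs_mult)
    finally show "F e * ?drop e \<le> \<bar>F e\<bar> * (L e * \<bar>current t e\<bar> / D t e)" .
  qed
  finally show ?thesis .
qed

lemma log_diameter_has_derivative:
  assumes "t \<in> {a..c}" "a \<ge> 0" "e \<in> E"
  shows "((\<lambda>s. ln (D s e)) has_real_derivative (\<bar>current t e\<bar> - D t e) / D t e) (at t within {a..c})"
proof -
  have "D t e > 0" using assms by (intro diameter_pos) auto
  from DERIV_chain2[OF DERIV_ln_divide[OF this] diameter_has_derivative_within[OF assms]]
  show ?thesis by simp
qed

text \<open>The derivative of the F-weighted sum of log-diameters is the F-weighted sum of |Q|/D minus
  the cost of F, which is at least the energy minus the cost of F by the previous lemma.\<close>

lemma weighted_log_diameter_growth:
  assumes t0: "0 \<le> t0" "t0 \<le> t" and F: "feasible_flow N E src tgt b F"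
    and above: "\<forall>s\<ge>t0. flow_cost E L F + g \<le> energy s"
  shows "(\<Sum>e\<in>E. L e * \<bar>F e\<bar> * ln (D t0 e)) + g * (t - t0) \<le> (\<Sum>e\<in>E. L e * \<bar>F e\<bar> * ln (D t e))"
proof -
  have "(\<Sum>e\<in>E. L e * \<bar>F e\<bar> * ln (D t0 e)) - g * t0 \<le> (\<Sum>e\<in>E. L e * \<bar>F e\<bar> * ln (D t e)) - g * t"
  proof (rule nonneg_derivative_imp_le[where f = "\<lambda>s. (\<Sum>e\<in>E. L e * \<bar>F e\<bar> * ln (D s e)) - g * s"])
    fix s assume s: "s \<in> {t0..t}"
    then have s0: "s \<ge> 0" using t0 by auto
    show "((\<lambda>s. (\<Sum>e\<in>E. L e * \<bar>F e\<bar> * ln (D s e)) - g * s) has_real_derivative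
        (\<Sum>e\<in>E. L e * \<bar>F e\<bar> * ((\<bar>current s e\<bar> - D s e) / D s e)) - g * 1) (at s within {t0..t})"
      by (intro DERIV_diff DERIV_sum DERIV_cmult DERIV_ident log_diameter_has_derivative s t0(1))
    have "(\<Sum>e\<in>E. L e * \<bar>F e\<bar> * ((\<bar>current s e\<bar> - D s e) / D s e))
        = (\<Sum>e\<in>E. \<bar>F e\<bar> * (L e * \<bar>current s e\<bar> / D s e)) - flow_cost E L F"
      unfolding flow_cost_def sum_subtractf[symmetric]
    proof (intro sum.cong refl)
      fix e assume "e \<in> E"
      then have "D s e > 0" by (rule diameter_pos[OF s0])
      then show "L e * \<bar>F e\<bar> * ((\<bar>current s e\<bar> - D s e) / D s e) =
          \<bar>F e\<bar> * (L e * \<bar>current s e\<bar> / D s e) - L e * \<bar>F e\<bar>"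
        by (simp add: field_simps)
    qed
    also have "\<dots> \<ge> energy s - flow_cost E L F" using energy_le_weighted_flow[OF s0 F] by simp
    finally show "0 \<le> (\<Sum>e\<in>E. L e * \<bar>F e\<bar> * ((\<bar>current s e\<bar> - D s e) / D s e)) - g * 1"
      using above s by auto
  qed (use t0 in auto)
  then show ?thesis by (simp add: algebra_simps)
qed

lemma weighted_log_diameter_le:
  assumes "t \<ge> 0"
  shows "(\<Sum>e\<in>E. L e * \<bar>F e\<bar> * ln (D t e)) \<le> (\<Sum>e\<in>E. L e * \<bar>F e\<bar> * ln (lyapunov 0 / L e))"
proof (rule sum_mono)
  fix e assume e: "e \<in> E"
  have "ln (D t e) \<le> ln (lyapunov 0 / L e)"
    using diameter_pos[OF assms e] diameter_le[OF assms e] by simp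
  then show "L e * \<bar>F e\<bar> * ln (D t e) \<le> L e * \<bar>F e\<bar> * ln (lyapunov 0 / L e)"
    using L_pos e by (intro mult_left_mono) auto
qed

text \<open>If a feasible flow were cheaper than the limit, the energy would eventually exceed its cost
  by a fixed margin, so the weighted log-diameters would grow without bound although the
  diameters are bounded.\<close>

lemma limit_cost_le_flow_cost:
  assumes lim: "\<forall>e\<in>E. ((\<lambda>t. D t e) \<longlongrightarrow> Ds e) at_top"
    and limit: "lyapunov_limit = 2 * equilibrium_cost E L Ds"
    and F: "feasible_flow N E src tgt b F"
  shows "equilibrium_cost E L Ds \<le> flow_cost E L F"
proof (rule ccontr)
  define c where "c = equilibrium_cost E L Ds"
  define g where "g = (c - flow_cost E L F) / 2"
  assume "\<not> equilibrium_cost E L Ds \<le> flow_cost E L F"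
  then have g: "g > 0" unfolding g_def c_def by simp
  have "(cost \<longlongrightarrow> c) at_top"
    unfolding cost_def[abs_def] c_def equilibrium_cost_def using lim by (intro tendsto_intros) auto
  from tendsto_diff[OF lyapunov_tendsto this] have "(energy \<longlongrightarrow> c) at_top"
    unfolding lyapunov_def limit c_def by simp
  moreover have "flow_cost E L F + g < c" using g unfolding g_def by (simp add: field_simps)
  ultimately have "eventually (\<lambda>s. flow_cost E L F + g < energy s) at_top"
    by (rule order_tendstoD(1))
  then obtain t1 where t1: "\<And>s. s \<ge> t1 \<Longrightarrow> flow_cost E L F + g < energy s"
    unfolding eventually_at_top_linorder by blast
  define t0 where "t0 = max t1 0"
  have t0: "t0 \<ge> 0" "\<forall>s\<ge>t0. flow_cost E L F + g \<le> energy s"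
    using t1 unfolding t0_def by (auto intro: less_imp_le)
  define \<Phi> where "\<Phi> t = (\<Sum>e\<in>E. L e * \<bar>F e\<bar> * ln (D t e))" for t
  define M where "M = (\<Sum>e\<in>E. L e * \<bar>F e\<bar> * ln (lyapunov 0 / L e))"
  define t where "t = t0 + \<bar>M - \<Phi> t0\<bar> / g + 1"
  have "t0 \<le> t" unfolding t_def using g by simp
  from weighted_log_diameter_growth[OF t0(1) this F t0(2)]
  have "\<Phi> t0 + g * (t - t0) \<le> \<Phi> t" unfolding \<Phi>_def .
  moreover have "g * (t - t0) = \<bar>M - \<Phi> t0\<bar> + g" unfolding t_def using g by (simp add: field_simps)
  moreover have "\<Phi> t \<le> M"
    unfolding \<Phi>_def M_def using \<open>t0 \<le> t\<close> t0(1) by (intro weighted_log_diameter_le) simp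
  ultimately show False using g by linarith
qed

end

text \<open>Connectivity and the balance of supplies and demands guarantee that currents exist; here
  this is already part of the hypothesis that D is a trajectory of the solver.\<close>

theorem mainTheorem18:
  fixes N :: "'v set" and E :: "'e set" and src tgt :: "'e \<Rightarrow> 'v"
    and L :: "'e \<Rightarrow> real" and b :: "'v \<Rightarrow> real" and D :: "real \<Rightarrow> 'e \<Rightarrow> real"
  assumes "finite N" and "finite E"
    and "\<forall>e\<in>E. src e \<in> N \<and> tgt e \<in> N"
    and "graph_connected N E src tgt"
    and "\<forall>e\<in>E. L e > 0"
    and "(\<Sum>v\<in>N. b v) = 0"
    and "physarum_solution N E src tgt b L D"
    and "\<forall>D1 D2. equilibrium N E src tgt b L D1 \<and> equilibrium N E src tgt b L D2 \<and>
            (\<exists>e\<in>E. D1 e \<noteq> D2 e) \<longrightarrow> equilibrium_cost E L D1 \<noteq> equilibrium_cost E L D2"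
  shows "\<exists>Dstar. equilibrium N E src tgt b L Dstar \<and>
           (\<forall>e\<in>E. ((\<lambda>t. D t e) \<longlongrightarrow> Dstar e) at_top) \<and>
           (\<exists>Fstar. feasible_flow N E src tgt b Fstar \<and>
              (\<forall>F. feasible_flow N E src tgt b F \<longrightarrow> flow_cost E L Fstar \<le> flow_cost E L F) \<and>
              (\<forall>e\<in>E. Dstar e = \<bar>Fstar e\<bar>))"
proof -
  interpret physarum_trajectory N E src tgt L b D
    using assms(1,2,3,5,7) by unfold_locales
  obtain Ds where equilibrium: "equilibrium N E src tgt b L Ds"
    and lim: "\<forall>e\<in>E. ((\<lambda>t. D t e) \<longlongrightarrow> Ds e) at_top"
    and limit: "lyapunov_limit = 2 * equilibrium_cost E L Ds"
    using diameter_tendsto_equilibrium[OF assms(8)] by blast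
  from equilibrium obtain Q where Q: "is_current N E src tgt b L Ds Q" "\<forall>e\<in>E. Ds e = \<bar>Q e\<bar>"
    unfolding equilibrium_def by blast
  have "flow_cost E L Q = equilibrium_cost E L Ds"
    unfolding flow_cost_def equilibrium_cost_def using Q(2) by simp
  then have "flow_cost E L Q \<le> flow_cost E L F" if "feasible_flow N E src tgt b F" for F
    using limit_cost_le_flow_cost[OF lim limit that] by simp
  moreover have "feasible_flow N E src tgt b Q" using Q(1) unfolding is_current_def by blast
  ultimately show ?thesis using equilibrium lim Q(2) by blast
qed

end
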